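(* Let $d\ge1$, $N\ge1$, let $a:\mathbb{Z}^d\to\mathbb{R}$ define a symmetric, spatially homogeneous, irreducible random walk as in the context, let $x_1,\dots,x_N\in\mathbb{Z}^d$ be distinct points, and let $\beta\in\mathbb{R}$. A number $\lambda>0$ is an eigenvalue of the operator $\mathscr{H}_\beta=\mathscr{A}+\beta\sum_{i=1}^N\delta_{x_i}\delta_{x_i}^T$ on $l^2(\mathbb{Z}^d)$ if and only if $\gamma_i(\lambda)\beta=1$ for at least one $i\in\{0,\dots,N-1\}$, where $\gamma_0(\lambda),\dots,\gamma_{N-1}(\lambda)$ are the eigenvalues of the $N\times N$ matrix $\Gamma(\lambda)=[\Gamma_{ij}(\lambda)]$ with $\Gamma_{ij}(\lambda)=G_\lambda(x_i,x_j)$. Moreover, $\Gamma_{ij}(\lambda)>0$ for all $i,j$.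
   Context: $a:\mathbb{Z}^d\to\mathbb{R}$ satisfies $a(0)<0$, $a(z)\ge0$ for $z\ne0$, $a(z)=a(-z)$, $\sum_z a(z)=0$, and irreducibility: every $z\in\mathbb{Z}^d$ is a finite sum $z_1+\dots+z_k$ with $a(z_i)\ne0$. $(\mathscr{A}u)(x)=\sum_{x'}a(x-x')u(x')$; $\delta_x$ is the indicator vector of $x$, so $(\mathscr{H}_\beta u)(x)=(\mathscr{A}u)(x)+\beta\sum_i\mathbf{1}_{\{x=x_i\}}u(x_i)$. With $\phi(\theta)=\sum_z a(z)e^{i(\theta,z)}$, $\theta\in[-\pi,\pi]^d$, the Green function for $\lambda>0$ is $G_\lambda(x,y)=\int_0^\infty e^{-\lambda t}p(t,x,y)\,dt=\frac{1}{(2\pi)^d}\int_{[-\pi,\pi]^d}\frac{e^{i(\theta,y-x)}}{\lambda-\phi(\theta)}d\theta$, $p(t,x,y)$ being the transition probabilities of the continuous-time random walk with generator $\mathscr{A}$. *)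

theory Defs
  imports "HOL-Analysis.Analysis"
begin

text \<open>Lattice points of Z^d are modelled as int ^ 'd with 'd a finite (nonempty) type, d = CARD('d).\<close>

definition rw_kernel :: "(int ^ 'd \<Rightarrow> real) \<Rightarrow> bool" where
  "rw_kernel a \<longleftrightarrow>
     a 0 < 0 \<and>
     (\<forall>z. z \<noteq> 0 \<longrightarrow> a z \<ge> 0) \<and>
     (\<forall>z. a z = a (- z)) \<and>
     (a has_sum 0) UNIV \<and>
     (\<forall>z. \<exists>zs. (\<forall>w\<in>set zs. a w \<noteq> 0) \<and> sum_list zs = z)"

definition opA :: "(int ^ 'd \<Rightarrow> real) \<Rightarrow> (int ^ 'd \<Rightarrow> real) \<Rightarrow> int ^ 'd \<Rightarrow> real" where
  "opA a u x = (\<Sum>\<^sub>\<infinity>x'. a (x - x') * u x')"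

definition opH :: "(int ^ 'd \<Rightarrow> real) \<Rightarrow> real \<Rightarrow> ('n::finite \<Rightarrow> int ^ 'd) \<Rightarrow>
                   (int ^ 'd \<Rightarrow> real) \<Rightarrow> int ^ 'd \<Rightarrow> real" where
  "opH a \<beta> xs u x = opA a u x + \<beta> * (\<Sum>i\<in>UNIV. (if x = xs i then u (xs i) else 0))"

definition in_l2 :: "(int ^ 'd \<Rightarrow> real) \<Rightarrow> bool" where
  "in_l2 u \<longleftrightarrow> (\<lambda>x. (u x)\<^sup>2) summable_on UNIV"

definition is_l2_eigenvalue ::
  "((int ^ 'd \<Rightarrow> real) \<Rightarrow> int ^ 'd \<Rightarrow> real) \<Rightarrow> real \<Rightarrow> bool" where
  "is_l2_eigenvalue H lam \<longleftrightarrow> (\<exists>u. in_l2 u \<and> u \<noteq> (\<lambda>_. 0) \<and> (\<forall>x. H u x = lam * u x))"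

definition ipz :: "real ^ 'd \<Rightarrow> int ^ 'd \<Rightarrow> real" where
  "ipz \<theta> z = (\<Sum>k\<in>UNIV. \<theta> $ k * of_int (z $ k))"

definition symbol :: "(int ^ 'd \<Rightarrow> real) \<Rightarrow> real ^ 'd \<Rightarrow> complex" where
  "symbol a \<theta> = (\<Sum>\<^sub>\<infinity>z. complex_of_real (a z) * exp (\<i> * complex_of_real (ipz \<theta> z)))"

definition green :: "(int ^ 'd \<Rightarrow> real) \<Rightarrow> real \<Rightarrow> int ^ 'd \<Rightarrow> int ^ 'd \<Rightarrow> complex" where
  "green a lam x y =
     (1 / (2 * complex_of_real pi) ^ CARD('d)) *
     integral (cbox (\<chi> k. - pi) (\<chi> k. pi))
       (\<lambda>\<theta>::real ^ 'd. exp (\<i> * complex_of_real (ipz \<theta> (y - x))) / (complex_of_real lam - symbol a \<theta>))"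

definition Gamma_mat :: "(int ^ 'd \<Rightarrow> real) \<Rightarrow> real \<Rightarrow> ('n::finite \<Rightarrow> int ^ 'd) \<Rightarrow> complex ^ 'n ^ 'n" where
  "Gamma_mat a lam xs = (\<chi> i j. green a lam (xs i) (xs j))"

definition mat_eigenvalue :: "complex ^ 'n ^ 'n \<Rightarrow> complex \<Rightarrow> bool" where
  "mat_eigenvalue M \<gamma> \<longleftrightarrow> (\<exists>v. v \<noteq> 0 \<and> M *v v = \<gamma> *s v)"

end

theory Submission
  imports Defs
begin

text \<open>Since a is even and a(0) = -\<Sum>_{z \<noteq> 0} a(z), the symbol \<phi> is real and nonpositive, so
  h = 1 / (\<lambda> - \<phi>) is continuous and bounded by 1/\<lambda> on the torus. Its Fourier coefficients are
  the values G_\<lambda>(x, y), which are therefore real, square summable (Bessel's inequality) and solve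
  (\<lambda> - A) G_\<lambda>(\<cdot>, y) = \<delta>_y. A minimum principle for \<lambda> - A makes G_\<lambda> nonnegative, and
  irreducibility would spread a zero of G_\<lambda>(\<cdot>, y) to y itself, which is impossible; so G_\<lambda> > 0.

  The same principle shows that \<lambda> - A annihilates no nonzero bounded function. A square summable
  eigenfunction u of H_\<beta> satisfies (\<lambda> - A) u = \<beta> \<Sum>_i u(x_i) \<delta>_{x_i}, hence
  u = \<beta> \<Sum>_j u(x_j) G_\<lambda>(\<cdot>, x_j), and evaluating at the x_i gives \<beta> \<Gamma>(\<lambda>) v = v for
  v = (u(x_i))_i \<noteq> 0. Conversely every such v yields the eigenfunction \<beta> \<Sum>_j v_j G_\<lambda>(\<cdot>, x_j),
  and the real matrix \<Gamma>(\<lambda>) has a real eigenvector for each real eigenvalue.\<close>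

section \<open>Characters and the symbol\<close>

definition fourier_char :: "real ^ 'd \<Rightarrow> int ^ 'd \<Rightarrow> complex" where
  "fourier_char \<theta> m = exp (\<i> * complex_of_real (ipz \<theta> m))"

lemma ipz_add_right: "ipz \<theta> (m + n) = ipz \<theta> m + ipz \<theta> n"
  by (simp add: ipz_def distrib_left sum.distrib)

lemma ipz_uminus_right: "ipz \<theta> (- m) = - ipz \<theta> m"
  by (simp add: ipz_def sum_negf)

lemma ipz_add_left: "ipz (\<theta> + \<eta>) m = ipz \<theta> m + ipz \<eta> m"
  by (simp add: ipz_def distrib_right sum.distrib)

lemma ipz_uminus_left: "ipz (- \<theta>) m = - ipz \<theta> m"
  by (simp add: ipz_def sum_negf)

lemma ipz_zero_right [simp]: "ipz \<theta> 0 = 0"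
  by (simp add: ipz_def)

lemma ipz_scaleR_axis: "ipz (t *\<^sub>R axis k 1) m = t * of_int (m $ k)"
proof -
  have "ipz (t *\<^sub>R axis k 1) m = (\<Sum>j\<in>UNIV. if j = k then t * of_int (m $ k) else 0)"
    unfolding ipz_def by (intro sum.cong) (auto simp: axis_def)
  then show ?thesis by simp
qed

lemma fourier_char_add: "fourier_char \<theta> (m + n) = fourier_char \<theta> m * fourier_char \<theta> n"
  by (simp add: fourier_char_def ipz_add_right distrib_left exp_add)

lemma fourier_char_zero [simp]: "fourier_char \<theta> 0 = 1"
  by (simp add: fourier_char_def)

lemma norm_fourier_char [simp]: "norm (fourier_char \<theta> m) = 1"
  by (simp add: fourier_char_def)

lemma cnj_fourier_char: "cnj (fourier_char \<theta> m) = fourier_char \<theta> (- m)"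
  by (simp add: fourier_char_def ipz_uminus_right exp_cnj)

lemma fourier_char_uminus_left: "fourier_char (- \<theta>) m = fourier_char \<theta> (- m)"
  by (simp add: fourier_char_def ipz_uminus_left ipz_uminus_right)

lemma continuous_on_fourier_char: "continuous_on S (\<lambda>\<theta>. fourier_char \<theta> m)"
  unfolding fourier_char_def ipz_def by (intro continuous_intros)

lemma rw_kernel_has_sum: "rw_kernel a \<Longrightarrow> (a has_sum 0) UNIV"
  by (simp add: rw_kernel_def)

lemma rw_kernel_abs_summable: "rw_kernel a \<Longrightarrow> (\<lambda>z. \<bar>a z\<bar>) summable_on UNIV"
  using rw_kernel_has_sum summable_on_iff_abs_summable_on_real by (fastforce simp: summable_on_def)

lemma rw_kernel_summable_scaleR:
  fixes B :: "int ^ 'd \<Rightarrow> 'b::banach"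
  assumes "rw_kernel a" "\<And>w. norm (B w) \<le> M"
  shows "(\<lambda>w. a w *\<^sub>R B w) summable_on UNIV"
proof (rule abs_summable_summable)
  have "(\<lambda>w. \<bar>a w\<bar> * M) summable_on UNIV"
    using rw_kernel_abs_summable[OF assms(1)] by (rule summable_on_cmult_left)
  then show "(\<lambda>w. norm (a w *\<^sub>R B w)) summable_on UNIV"
    by (rule summable_on_comparison_test) (simp_all add: mult_left_mono assms(2))
qed

lemma symbol_has_sum:
  assumes "rw_kernel a"
  shows "((\<lambda>z. a z *\<^sub>R fourier_char \<theta> z) has_sum symbol a \<theta>) UNIV"
proof -
  have "(\<lambda>z. a z *\<^sub>R fourier_char \<theta> z) summable_on UNIV"
    by (rule rw_kernel_summable_scaleR[OF assms, of _ 1]) simp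
  moreover have "symbol a \<theta> = (\<Sum>\<^sub>\<infinity>z. a z *\<^sub>R fourier_char \<theta> z)"
    unfolding symbol_def fourier_char_def by (simp add: scaleR_conv_of_real)
  ultimately show ?thesis by simp
qed

text \<open>The imaginary part of the symbol vanishes because \<open>a\<close> is even and \<open>sin\<close> is odd.\<close>

lemma Im_symbol:
  assumes "rw_kernel a"
  shows "Im (symbol a \<theta>) = 0"
proof -
  define f where "f z = a z * sin (ipz \<theta> z)" for z
  have f: "(f has_sum Im (symbol a \<theta>)) UNIV"
    unfolding f_def using has_sum_Im[OF symbol_has_sum[OF assms]] by (simp add: fourier_char_def Im_exp)
  have bij: "bij_betw uminus (UNIV :: (int ^ 'd) set) UNIV"
    by (rule bij_betwI[where g = uminus]) auto
  have "((\<lambda>z. f (- z)) has_sum Im (symbol a \<theta>)) UNIV"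
    using has_sum_reindex_bij_betw[OF bij, of f] f by simp
  moreover have "f (- z) = - f z" for z
    using assms unfolding rw_kernel_def f_def by (metis ipz_uminus_right minus_mult_right sin_minus)
  ultimately have "(f has_sum - Im (symbol a \<theta>)) UNIV"
    using has_sum_uminus[where f = "\<lambda>z. - f z"] by simp
  from has_sum_unique[OF f this] show ?thesis by simp
qed

lemma Re_symbol_has_sum:
  assumes "rw_kernel a"
  shows "((\<lambda>z. a z * cos (ipz \<theta> z)) has_sum Re (symbol a \<theta>)) UNIV"
  using has_sum_Re[OF symbol_has_sum[OF assms]] by (simp add: fourier_char_def Re_exp)

lemma Re_symbol_nonpos:
  assumes "rw_kernel a"
  shows "Re (symbol a \<theta>) \<le> 0"
proof -
  have "a z * cos (ipz \<theta> z) \<le> a z" for z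
    using assms mult_left_le[of "cos (ipz \<theta> z)" "a z"] unfolding rw_kernel_def
    by (cases "z = 0") auto
  then show ?thesis
    using has_sum_mono[OF Re_symbol_has_sum[OF assms] rw_kernel_has_sum[OF assms]] by auto
qed

lemma symbol_eq_of_real_Re:
  "rw_kernel a \<Longrightarrow> symbol a \<theta> = complex_of_real (Re (symbol a \<theta>))"
  using Im_symbol by (simp add: complex_eq_iff)

lemma symbol_uminus:
  assumes "rw_kernel a"
  shows "symbol a (- \<theta>) = symbol a \<theta>"
proof -
  have "Re (symbol a (- \<theta>)) = Re (symbol a \<theta>)"
    using Re_symbol_has_sum[OF assms, of "- \<theta>"] Re_symbol_has_sum[OF assms, of \<theta>]
    by (simp add: ipz_uminus_left has_sum_unique)
  then show ?thesis using symbol_eq_of_real_Re[OF assms] by metis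
qed

lemma continuous_on_symbol:
  assumes "rw_kernel a"
  shows "continuous_on S (symbol a)"
proof -
  have "uniform_limit UNIV (\<lambda>F \<theta>. \<Sum>z\<in>F. a z *\<^sub>R fourier_char \<theta> z)
          (\<lambda>\<theta>. \<Sum>\<^sub>\<infinity>z. a z *\<^sub>R fourier_char \<theta> z) (finite_subsets_at_top UNIV)"
    by (rule Weierstrass_m_test_general[where M = "\<lambda>z. \<bar>a z\<bar>"])
       (simp_all add: rw_kernel_abs_summable[OF assms])
  then have "continuous_on UNIV (\<lambda>\<theta>. \<Sum>\<^sub>\<infinity>z. a z *\<^sub>R fourier_char \<theta> z)"
    by (rule uniform_limit_theorem[rotated])
       (auto intro!: always_eventually continuous_intros continuous_on_fourier_char
             simp: finite_subsets_at_top_neq_bot)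
  moreover have "(\<lambda>\<theta>. \<Sum>\<^sub>\<infinity>z. a z *\<^sub>R fourier_char \<theta> z) = symbol a"
    using symbol_has_sum[OF assms] by (auto simp: fun_eq_iff infsumI)
  ultimately show ?thesis by (metis continuous_on_subset subset_UNIV)
qed

definition resolvent_symbol :: "(int ^ 'd \<Rightarrow> real) \<Rightarrow> real \<Rightarrow> real ^ 'd \<Rightarrow> complex" where
  "resolvent_symbol a lam \<theta> = 1 / (complex_of_real lam - symbol a \<theta>)"

lemma Re_lam_minus_symbol_ge:
  "rw_kernel a \<Longrightarrow> lam \<le> Re (complex_of_real lam - symbol a \<theta>)"
  using Re_symbol_nonpos by simp

lemma lam_minus_symbol_nonzero:
  "rw_kernel a \<Longrightarrow> lam > 0 \<Longrightarrow> complex_of_real lam - symbol a \<theta> \<noteq> 0"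
  using Re_lam_minus_symbol_ge[of a lam \<theta>] by (metis not_le zero_complex.sel(1))

lemma resolvent_symbol_mult:
  "rw_kernel a \<Longrightarrow> lam > 0 \<Longrightarrow> resolvent_symbol a lam \<theta> * (complex_of_real lam - symbol a \<theta>) = 1"
  using lam_minus_symbol_nonzero by (simp add: resolvent_symbol_def)

lemma norm_resolvent_symbol_le:
  assumes "rw_kernel a" "lam > 0"
  shows "norm (resolvent_symbol a lam \<theta>) \<le> 1 / lam"
proof -
  have "lam \<le> norm (complex_of_real lam - symbol a \<theta>)"
    using Re_lam_minus_symbol_ge[OF assms(1)] complex_Re_le_cmod order_trans by blast
  then show ?thesis
    using assms(2) by (simp add: resolvent_symbol_def norm_divide frac_le)
qed

lemma cnj_resolvent_symbol:
  "rw_kernel a \<Longrightarrow> cnj (resolvent_symbol a lam \<theta>) = resolvent_symbol a lam (- \<theta>)"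
  by (metis resolvent_symbol_def symbol_uminus symbol_eq_of_real_Re complex_cnj_complex_of_real
        complex_cnj_diff complex_cnj_divide complex_cnj_one)

lemma continuous_on_resolvent_symbol:
  "rw_kernel a \<Longrightarrow> lam > 0 \<Longrightarrow> continuous_on S (resolvent_symbol a lam)"
  unfolding resolvent_symbol_def
  by (intro continuous_intros continuous_on_symbol) (use lam_minus_symbol_nonzero in auto)


section \<open>Fourier analysis on the period box\<close>

abbreviation period_box :: "(real ^ 'd) set" where
  "period_box \<equiv> cbox (\<chi> k. - pi) (\<chi> k. pi)"

definition slab :: "'d \<Rightarrow> real \<Rightarrow> real \<Rightarrow> (real ^ 'd) set" where
  "slab k p q = cbox (\<chi> j. if j = k then p else - pi) (\<chi> j. if j = k then q else pi)"

lemma period_box_eq_slab: "period_box = slab k (- pi) pi"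
  by (simp add: slab_def vec_eq_iff cong: if_cong)

lemma measure_period_box: "measure lborel (period_box :: (real ^ 'd) set) = (2 * pi) ^ CARD('d)"
proof -
  have "(0 :: real ^ 'd) \<in> period_box"
    by (simp add: mem_box_cart)
  then have "period_box \<noteq> ({} :: (real ^ 'd) set)" by blast
  then show ?thesis by (simp add: content_cbox_cart)
qed

lemma integral_slab_split:
  fixes f :: "real ^ 'd \<Rightarrow> complex"
  assumes f: "continuous_on UNIV f" and "p \<le> r" "r \<le> q"
  shows "integral (slab k p q) f = integral (slab k p r) f + integral (slab k r q) f"
proof -
  have k: "axis k (1::real) \<in> Basis" by (simp add: Basis_vec_def) blast
  obtain A B where AB: "slab k p q = cbox A B" unfolding slab_def by blast
  have "f integrable_on cbox A B"
    by (rule integrable_continuous) (rule continuous_on_subset[OF f], simp)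
  then have "integral (slab k p q) f = integral (slab k p q \<inter> {x. x \<bullet> axis k 1 \<le> r}) f
      + integral (slab k p q \<inter> {x. x \<bullet> axis k 1 \<ge> r}) f"
    unfolding AB by (rule integral_split[OF _ k])
  moreover have "slab k p q \<inter> {x. x \<bullet> axis k 1 \<le> r} = slab k p r"
    "slab k p q \<inter> {x. x \<bullet> axis k 1 \<ge> r} = slab k r q"
    using assms by (auto simp: slab_def mem_box_cart inner_axis split: if_splits; metis order.trans)+
  ultimately show ?thesis by simp
qed

lemma integral_slab_translate:
  fixes f :: "real ^ 'd \<Rightarrow> complex"
  assumes f: "continuous_on UNIV f"
  shows "integral (slab k (p + s) (q + s)) f = integral (slab k p q) (\<lambda>x. f (x + s *\<^sub>R axis k 1))"
proof -
  define A B where "A = (\<chi> j. if j = k then p + s else - pi)" and "B = (\<chi> j. if j = k then q + s else pi)"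
  have "A - s *\<^sub>R axis k 1 = (\<chi> j. if j = k then p else - pi)"
    "B - s *\<^sub>R axis k 1 = (\<chi> j. if j = k then q else pi)"
    unfolding A_def B_def by (simp_all add: vec_eq_iff axis_def)
  then have AB: "slab k (p + s) (q + s) = cbox A B" "slab k p q = cbox (A - s *\<^sub>R axis k 1) (B - s *\<^sub>R axis k 1)"
    unfolding slab_def A_def B_def by simp_all
  have "f integrable_on cbox A B"
    by (rule integrable_continuous) (rule continuous_on_subset[OF f], simp)
  then have "((\<lambda>x. f (1 *\<^sub>R x + s *\<^sub>R axis k 1)) has_integral integral (cbox A B) f /\<^sub>R 1 ^ DIM(real ^ 'd))
      (cbox ((A - s *\<^sub>R axis k 1) /\<^sub>R 1) ((B - s *\<^sub>R axis k 1) /\<^sub>R 1))"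
    by (intro has_integral_affinity') (simp_all add: has_integral_integral)
  then show ?thesis unfolding AB by (simp add: integral_unique)
qed

lemma integral_slab_periodic:
  fixes f :: "real ^ 'd \<Rightarrow> complex"
  assumes f: "continuous_on UNIV f" and per: "\<And>x. f (x + (2 * pi) *\<^sub>R axis k 1) = f x"
    and t: "0 \<le> t" "t \<le> 2 * pi"
  shows "integral (slab k (- pi + t) (pi + t)) f = integral (slab k (- pi) pi) f"
proof -
  have "integral (slab k (- pi + t) (pi + t)) f =
        integral (slab k (- pi + t) pi) f + integral (slab k pi (pi + t)) f"
    by (rule integral_slab_split[OF f]) (use t in auto)
  also have "integral (slab k pi (pi + t)) f = integral (slab k (- pi + 2 * pi) ((- pi + t) + 2 * pi)) f"
    by (simp add: algebra_simps)
  also have "\<dots> = integral (slab k (- pi) (- pi + t)) (\<lambda>x. f (x + (2 * pi) *\<^sub>R axis k 1))"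
    by (rule integral_slab_translate[OF f])
  also have "\<dots> = integral (slab k (- pi) (- pi + t)) f"
    by (simp add: per)
  also have "integral (slab k (- pi + t) pi) f + integral (slab k (- pi) (- pi + t)) f
      = integral (slab k (- pi) pi) f"
    using integral_slab_split[OF f, of "- pi" "- pi + t" pi k] t by simp
  finally show ?thesis .
qed

text \<open>For \<open>m $ k \<noteq> 0\<close>, translating by \<open>\<pi> / \<bar>m $ k\<bar>\<close> in direction \<open>k\<close> changes the sign of the
  integrand but, by periodicity, not the integral.\<close>

lemma has_integral_fourier_char:
  "((\<lambda>\<theta>. fourier_char \<theta> m) has_integral
     (if m = 0 then complex_of_real ((2 * pi) ^ CARD('d)) else 0)) (period_box :: (real ^ 'd) set)"
proof (cases "m = 0")
  case True
  then show ?thesis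
    using has_integral_const[of "1::complex" "(\<chi> k. - pi) :: real ^ 'd" "\<chi> k. pi"]
    by (simp add: measure_period_box scaleR_conv_of_real)
next
  case False
  then obtain k where mk: "m $ k \<noteq> 0" by (auto simp: vec_eq_iff)
  define t where "t = pi / \<bar>of_int (m $ k)\<bar>"
  have "\<bar>of_int (m $ k)\<bar> \<ge> (1::real)" using mk by linarith
  then have t: "0 \<le> t" "t \<le> 2 * pi"
    unfolding t_def by (auto simp: divide_le_eq intro: order_trans[of _ pi])
  define f where "f \<theta> = fourier_char \<theta> m" for \<theta> :: "real ^ 'd"
  have fc: "continuous_on UNIV f" unfolding f_def by (rule continuous_on_fourier_char)
  have shift: "f (x + s *\<^sub>R axis k 1) = f x * exp (\<i> * complex_of_real (s * of_int (m $ k)))" for x s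
    by (simp add: f_def fourier_char_def ipz_add_left ipz_scaleR_axis distrib_left exp_add)
  have per: "f (x + (2 * pi) *\<^sub>R axis k 1) = f x" for x
    using shift[of x "2 * pi"] exp_2pi_1_int[of "m $ k"] by (simp add: mult_ac)
  have half: "exp (\<i> * complex_of_real (t * of_int (m $ k))) = -1"
    using mk by (auto simp: t_def abs_if exp_eq_polar complex_eq_iff)
  define I where "I = integral period_box f"
  have "I = integral (slab k (- pi + t) (pi + t)) f"
    unfolding I_def period_box_eq_slab[of k] by (rule integral_slab_periodic[OF fc per t, symmetric])
  also have "\<dots> = integral (slab k (- pi) pi) (\<lambda>x. f (x + t *\<^sub>R axis k 1))"
    by (rule integral_slab_translate[OF fc])
  also have "\<dots> = integral (slab k (- pi) pi) (\<lambda>x. - f x)"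
    unfolding shift half by simp
  also have "\<dots> = - I"
    unfolding I_def period_box_eq_slab[of k] by (simp add: integral_neg)
  finally have "I = 0" by simp
  moreover have "f integrable_on period_box"
    by (rule integrable_continuous) (rule continuous_on_subset[OF fc], simp)
  ultimately have "(f has_integral 0) period_box"
    unfolding I_def using has_integral_integral by metis
  then show ?thesis using False unfolding f_def by simp
qed

lemma integral_fourier_char:
  fixes m :: "int ^ 'd"
  shows "integral period_box (\<lambda>\<theta>. fourier_char \<theta> m) =
     (if m = 0 then complex_of_real ((2 * pi) ^ CARD('d)) else 0)"
  by (rule integral_unique[OF has_integral_fourier_char])

lemma has_sum_integral_infsum:
  fixes F :: "'i \<Rightarrow> real ^ 'd \<Rightarrow> complex"
  assumes cont: "\<And>i. continuous_on period_box (F i)" and bd: "\<And>i \<theta>. norm (F i \<theta>) \<le> M i"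
    and M: "M summable_on UNIV"
  shows "((\<lambda>i. integral period_box (F i)) has_sum integral period_box (\<lambda>\<theta>. \<Sum>\<^sub>\<infinity>i. F i \<theta>)) UNIV"
proof -
  have "uniform_limit period_box (\<lambda>S \<theta>. \<Sum>i\<in>S. F i \<theta>) (\<lambda>\<theta>. \<Sum>\<^sub>\<infinity>i. F i \<theta>) (finite_subsets_at_top UNIV)"
    by (rule Weierstrass_m_test_general[OF bd M])
  then obtain I J where I: "\<And>S. ((\<lambda>\<theta>. \<Sum>i\<in>S. F i \<theta>) has_integral I S) period_box"
    and J: "((\<lambda>\<theta>. \<Sum>\<^sub>\<infinity>i. F i \<theta>) has_integral J) period_box"
    and lim: "(I \<longlongrightarrow> J) (finite_subsets_at_top UNIV)"
    by (rule uniform_limit_integral_cbox)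
       (auto intro!: continuous_intros cont simp: finite_subsets_at_top_neq_bot)
  have "\<forall>\<^sub>F S in finite_subsets_at_top UNIV. I S = (\<Sum>i\<in>S. integral period_box (F i))"
  proof (rule eventually_finite_subsets_at_top_weakI)
    fix S :: "'i set" assume "finite S"
    then show "I S = (\<Sum>i\<in>S. integral period_box (F i))"
      using integral_sum[of S F period_box] I[of S] cont
      by (simp add: integrable_continuous integral_unique)
  qed
  then have "((\<lambda>S. \<Sum>i\<in>S. integral period_box (F i)) \<longlongrightarrow> J) (finite_subsets_at_top UNIV)"
    using lim tendsto_cong by fastforce
  then show ?thesis using J by (simp add: has_sum_def integral_unique)
qed


section \<open>The Green function\<close>

definition resolvent_coeff :: "(int ^ 'd \<Rightarrow> real) \<Rightarrow> real \<Rightarrow> int ^ 'd \<Rightarrow> complex" where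
  "resolvent_coeff a lam m = integral period_box (\<lambda>\<theta>. fourier_char \<theta> m * resolvent_symbol a lam \<theta>)"

lemma green_eq_resolvent_coeff:
  fixes a :: "int ^ 'd \<Rightarrow> real"
  shows "green a lam x y = resolvent_coeff a lam (y - x) / complex_of_real ((2 * pi) ^ CARD('d))"
  unfolding green_def resolvent_coeff_def fourier_char_def resolvent_symbol_def by simp

lemma continuous_on_resolvent_integrand:
  "rw_kernel a \<Longrightarrow> lam > 0 \<Longrightarrow> continuous_on S (\<lambda>\<theta>. fourier_char \<theta> m * resolvent_symbol a lam \<theta>)"
  by (intro continuous_intros continuous_on_fourier_char continuous_on_resolvent_symbol)

text \<open>Multiplication by the symbol corresponds to convolution with \<open>a\<close>, and
  \<open>\<phi> h = \<lambda> h - 1\<close> for \<open>h = 1 / (\<lambda> - \<phi>)\<close>.\<close>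

lemma resolvent_coeff_has_sum:
  fixes a :: "int ^ 'd \<Rightarrow> real"
  assumes "rw_kernel a" "lam > 0"
  shows "((\<lambda>w. a w *\<^sub>R resolvent_coeff a lam (m + w)) has_sum
     (complex_of_real lam * resolvent_coeff a lam m - (if m = 0 then complex_of_real ((2 * pi) ^ CARD('d)) else 0))) UNIV"
proof -
  define h where "h \<theta> = fourier_char \<theta> m * resolvent_symbol a lam \<theta>" for \<theta> :: "real ^ 'd"
  define F where "F w \<theta> = a w *\<^sub>R (fourier_char \<theta> (m + w) * resolvent_symbol a lam \<theta>)" for w \<theta>
  have hc: "continuous_on S h" for S
    unfolding h_def by (rule continuous_on_resolvent_integrand[OF assms])
  have "((\<lambda>w. integral period_box (F w)) has_sum integral period_box (\<lambda>\<theta>. \<Sum>\<^sub>\<infinity>w. F w \<theta>)) UNIV"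
  proof (rule has_sum_integral_infsum)
    show "continuous_on period_box (F w)" for w
      unfolding F_def by (intro continuous_intros continuous_on_resolvent_integrand[OF assms])
    show "norm (F w \<theta>) \<le> \<bar>a w\<bar> * (1 / lam)" for w \<theta>
      using mult_left_mono[OF norm_resolvent_symbol_le[OF assms, of \<theta>] abs_ge_zero[of "a w"]]
      by (simp add: F_def norm_mult)
    show "(\<lambda>w. \<bar>a w\<bar> * (1 / lam)) summable_on UNIV"
      using rw_kernel_abs_summable[OF assms(1)] by (rule summable_on_cmult_left)
  qed
  moreover have "integral period_box (F w) = a w *\<^sub>R resolvent_coeff a lam (m + w)" for w
    unfolding F_def resolvent_coeff_def by simp
  moreover have "(\<Sum>\<^sub>\<infinity>w. F w \<theta>) = h \<theta> * symbol a \<theta>" for \<theta>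
  proof -
    have "((\<lambda>w. h \<theta> * (a w *\<^sub>R fourier_char \<theta> w)) has_sum h \<theta> * symbol a \<theta>) UNIV"
      by (rule has_sum_cmult_right[OF symbol_has_sum[OF assms(1)]])
    moreover have "h \<theta> * (a w *\<^sub>R fourier_char \<theta> w) = F w \<theta>" for w
      by (simp add: F_def h_def fourier_char_add)
    ultimately show ?thesis by (simp add: infsumI)
  qed
  moreover have "integral period_box (\<lambda>\<theta>. h \<theta> * symbol a \<theta>)
      = complex_of_real lam * resolvent_coeff a lam m - integral period_box (\<lambda>\<theta>. fourier_char \<theta> m)"
  proof -
    have "h \<theta> * symbol a \<theta> = complex_of_real lam * h \<theta> - fourier_char \<theta> m" for \<theta>
      using resolvent_symbol_mult[OF assms, of \<theta>] unfolding h_def by algebra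
    then have "integral period_box (\<lambda>\<theta>. h \<theta> * symbol a \<theta>)
        = integral period_box (\<lambda>\<theta>. complex_of_real lam * h \<theta> - fourier_char \<theta> m)"
      by simp
    also have "\<dots> = complex_of_real lam * integral period_box h - integral period_box (\<lambda>\<theta>. fourier_char \<theta> m)"
      by (subst integral_diff)
         (auto intro!: integrable_continuous continuous_intros hc continuous_on_fourier_char)
    finally show ?thesis unfolding resolvent_coeff_def h_def .
  qed
  ultimately show ?thesis by (simp add: integral_fourier_char)
qed

lemma cnj_resolvent_coeff:
  fixes a :: "int ^ 'd \<Rightarrow> real"
  assumes "rw_kernel a"
  shows "cnj (resolvent_coeff a lam m) = resolvent_coeff a lam m"
proof -
  have reflect: "- (\<chi> k. pi) = ((\<chi> k. - pi) :: real ^ 'd)" "- (\<chi> k. - pi) = ((\<chi> k. pi) :: real ^ 'd)"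
    by (simp_all add: vec_eq_iff)
  have "cnj (resolvent_coeff a lam m)
      = integral period_box (\<lambda>\<theta>. fourier_char (- \<theta>) m * resolvent_symbol a lam (- \<theta>))"
    unfolding resolvent_coeff_def integral_cnj
    by (simp add: cnj_fourier_char fourier_char_uminus_left cnj_resolvent_symbol[OF assms])
  also have "\<dots> = resolvent_coeff a lam m"
    unfolding resolvent_coeff_def
    using integral_reflect[of "\<chi> k. pi" "\<chi> k. - pi" "\<lambda>\<theta>. fourier_char \<theta> m * resolvent_symbol a lam \<theta>"]
    by (simp only: reflect)
  finally show ?thesis .
qed

lemma norm_resolvent_coeff_le:
  fixes a :: "int ^ 'd \<Rightarrow> real"
  assumes "rw_kernel a" "lam > 0"
  shows "norm (resolvent_coeff a lam m) \<le> (2 * pi) ^ CARD('d) / lam"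
proof -
  have "norm (resolvent_coeff a lam m) \<le> 1 / lam * measure lborel (period_box :: (real ^ 'd) set)"
    unfolding resolvent_coeff_def
  proof (rule has_integral_bound)
    show "0 \<le> 1 / lam" using assms by simp
    show "((\<lambda>\<theta>. fourier_char \<theta> m * resolvent_symbol a lam \<theta>) has_integral
        integral period_box (\<lambda>\<theta>. fourier_char \<theta> m * resolvent_symbol a lam \<theta>)) period_box"
      by (intro integrable_integral integrable_continuous continuous_on_resolvent_integrand[OF assms])
    show "norm (fourier_char \<theta> m * resolvent_symbol a lam \<theta>) \<le> 1 / lam" for \<theta>
      using norm_resolvent_symbol_le[OF assms] by (simp add: norm_mult)
  qed
  then show ?thesis by (simp add: measure_period_box)
qed

text \<open>Argument order: \<open>green_at a lam y\<close> is \<open>G\<^sub>\<lambda>(\<cdot>, y)\<close>, the solution of \<open>(\<lambda> - \<A>) g = \<delta>\<^sub>y\<close>.\<close>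

definition green_at :: "(int ^ 'd \<Rightarrow> real) \<Rightarrow> real \<Rightarrow> int ^ 'd \<Rightarrow> int ^ 'd \<Rightarrow> real" where
  "green_at a lam y x = Re (green a lam x y)"

lemma green_at_eq_resolvent_coeff:
  fixes a :: "int ^ 'd \<Rightarrow> real"
  shows "green_at a lam y x = Re (resolvent_coeff a lam (y - x)) / (2 * pi) ^ CARD('d)"
  unfolding green_at_def green_eq_resolvent_coeff by (rule Re_divide_of_real)

lemma green_eq_of_real_green_at:
  fixes a :: "int ^ 'd \<Rightarrow> real"
  assumes "rw_kernel a"
  shows "green a lam x y = complex_of_real (green_at a lam y x)"
proof -
  have "Im (resolvent_coeff a lam (y - x)) = 0"
    using cnj_resolvent_coeff[OF assms, of lam "y - x"] by (simp add: complex_eq_iff)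
  then have "Im (green a lam x y) = 0"
    unfolding green_eq_resolvent_coeff Im_divide_of_real by simp
  then show ?thesis
    unfolding green_at_def by (simp add: complex_eq_iff)
qed

lemma abs_green_at_le:
  fixes a :: "int ^ 'd \<Rightarrow> real"
  assumes "rw_kernel a" "lam > 0"
  shows "\<bar>green_at a lam y x\<bar> \<le> 1 / lam"
proof -
  have "\<bar>Re (resolvent_coeff a lam (y - x))\<bar> \<le> (2 * pi) ^ CARD('d) / lam"
    using abs_Re_le_cmod norm_resolvent_coeff_le[OF assms] order_trans by blast
  then show ?thesis
    by (simp add: green_at_eq_resolvent_coeff abs_divide divide_le_eq field_simps)
qed

lemma green_at_has_sum:
  fixes a :: "int ^ 'd \<Rightarrow> real"
  assumes "rw_kernel a" "lam > 0"
  shows "((\<lambda>w. a w * green_at a lam y (x - w)) has_sum (lam * green_at a lam y x - (if x = y then 1 else 0))) UNIV"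
proof -
  define P :: real where "P = (2 * pi) ^ CARD('d)"
  have "((\<lambda>w. Re (a w *\<^sub>R resolvent_coeff a lam ((y - x) + w)) / P) has_sum
      Re (complex_of_real lam * resolvent_coeff a lam (y - x) - (if y - x = 0 then complex_of_real P else 0)) / P) UNIV"
    unfolding P_def by (intro has_sum_divide_const has_sum_Re resolvent_coeff_has_sum[OF assms])
  moreover have "Re (a w *\<^sub>R resolvent_coeff a lam ((y - x) + w)) / P = a w * green_at a lam y (x - w)" for w
    by (simp add: green_at_eq_resolvent_coeff P_def algebra_simps)
  moreover have "Re (complex_of_real lam * resolvent_coeff a lam (y - x) - (if y - x = 0 then complex_of_real P else 0)) / P
      = lam * green_at a lam y x - (if x = y then 1 else 0)"
    by (cases "x = y") (simp_all add: green_at_eq_resolvent_coeff P_def diff_divide_distrib)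
  ultimately show ?thesis by simp
qed


lemma norm_integral_mult_le:
  fixes f g :: "'a::euclidean_space \<Rightarrow> complex"
  assumes f: "continuous_on (cbox u v) f" and g: "continuous_on (cbox u v) g"
  shows "norm (integral (cbox u v) (\<lambda>x. f x * g x))
       \<le> integral (cbox u v) (\<lambda>x. (norm (f x))\<^sup>2) / 2 + integral (cbox u v) (\<lambda>x. (norm (g x))\<^sup>2) / 2"
proof -
  have "norm (integral (cbox u v) (\<lambda>x. f x * g x))
      \<le> integral (cbox u v) (\<lambda>x. (norm (f x))\<^sup>2 / 2 + (norm (g x))\<^sup>2 / 2)"
  proof (rule integral_norm_bound_integral)
    show "norm (f x * g x) \<le> (norm (f x))\<^sup>2 / 2 + (norm (g x))\<^sup>2 / 2" for x
      using sum_squares_ge_zero[of "norm (f x) - norm (g x)" 0]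
      by (simp add: norm_mult power2_eq_square algebra_simps)
  qed (intro integrable_continuous continuous_intros f g; simp)+
  also have "\<dots> = integral (cbox u v) (\<lambda>x. (norm (f x))\<^sup>2) / 2 + integral (cbox u v) (\<lambda>x. (norm (g x))\<^sup>2) / 2"
    by (subst integral_add) (auto intro!: integrable_continuous continuous_intros f g)
  finally show ?thesis .
qed

lemma integral_norm_sq_fourier_sum:
  fixes c :: "int ^ 'd \<Rightarrow> complex"
  assumes F: "finite F"
  shows "integral period_box (\<lambda>\<theta>. (norm (\<Sum>m\<in>F. c m * fourier_char \<theta> m))\<^sup>2)
       = (2 * pi) ^ CARD('d) * (\<Sum>m\<in>F. (norm (c m))\<^sup>2)"
proof -
  define S where "S \<theta> = (\<Sum>m\<in>F. c m * fourier_char \<theta> m)" for \<theta> :: "real ^ 'd"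
  have SS: "S \<theta> * cnj (S \<theta>) = (\<Sum>m\<in>F. \<Sum>n\<in>F. c m * cnj (c n) * fourier_char \<theta> (m - n))" for \<theta>
  proof -
    have "fourier_char \<theta> m * fourier_char \<theta> (- n) = fourier_char \<theta> (m - n)" for m n
      by (simp add: fourier_char_add[symmetric])
    then show ?thesis
      unfolding S_def by (simp add: sum_product cnj_fourier_char mult_ac)
  qed
  have "integral period_box (\<lambda>\<theta>. S \<theta> * cnj (S \<theta>))
      = (\<Sum>m\<in>F. \<Sum>n\<in>F. c m * cnj (c n) * integral period_box (\<lambda>\<theta>. fourier_char \<theta> (m - n)))"
    unfolding SS
    by (subst integral_sum[OF F], force intro!: integrable_sum integrable_continuous continuous_intros
          continuous_on_fourier_char F)
       (intro sum.cong refl, subst integral_sum[OF F],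
         auto intro!: integrable_continuous continuous_intros continuous_on_fourier_char)
  also have "\<dots> = (\<Sum>m\<in>F. c m * cnj (c m) * complex_of_real ((2 * pi) ^ CARD('d)))"
    by (simp add: integral_fourier_char if_distrib F cong: if_cong)
  also have "\<dots> = complex_of_real ((2 * pi) ^ CARD('d) * (\<Sum>m\<in>F. (norm (c m))\<^sup>2))"
    by (simp add: sum_distrib_right mult.commute flip: complex_norm_square)
  finally have "integral period_box (\<lambda>\<theta>. S \<theta> * cnj (S \<theta>))
      = complex_of_real ((2 * pi) ^ CARD('d) * (\<Sum>m\<in>F. (norm (c m))\<^sup>2))" .
  moreover have "(\<lambda>\<theta>. S \<theta> * cnj (S \<theta>)) integrable_on period_box"
    unfolding S_def by (intro integrable_continuous continuous_intros continuous_on_fourier_char)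
  then have "integral period_box (\<lambda>\<theta>. Re (S \<theta> * cnj (S \<theta>))) = Re (integral period_box (\<lambda>\<theta>. S \<theta> * cnj (S \<theta>)))"
    by (rule integral_linear[OF _ bounded_linear_Re, unfolded o_def])
  moreover have "Re (S \<theta> * cnj (S \<theta>)) = (norm (S \<theta>))\<^sup>2" for \<theta>
    by (simp flip: complex_norm_square)
  ultimately show ?thesis unfolding S_def by simp
qed

lemma integral_norm_sq_resolvent_symbol_le:
  fixes a :: "int ^ 'd \<Rightarrow> real"
  assumes "rw_kernel a" "lam > 0"
  shows "integral period_box (\<lambda>\<theta>. (norm (resolvent_symbol a lam \<theta>))\<^sup>2) \<le> (2 * pi) ^ CARD('d) * (1 / lam)\<^sup>2"
proof -
  have "integral period_box (\<lambda>\<theta>. (norm (resolvent_symbol a lam \<theta>))\<^sup>2)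
      \<le> integral period_box (\<lambda>\<theta>::real ^ 'd. (1 / lam)\<^sup>2)"
    using norm_resolvent_symbol_le[OF assms]
    by (intro integral_le)
       (auto intro!: integrable_continuous continuous_intros continuous_on_resolvent_symbol[OF assms] power_mono)
  then show ?thesis
    using measure_period_box[where 'd = 'd] by simp
qed

text \<open>Bessel's inequality for the Fourier coefficients of the resolvent symbol \<open>h\<close>: pair \<open>h\<close> with
  the trigonometric polynomial \<open>S\<close> having these coefficients.\<close>

lemma sum_sq_green_at_le:
  fixes a :: "int ^ 'd \<Rightarrow> real"
  assumes ker: "rw_kernel a" and lam: "lam > 0" and F: "finite F"
  shows "(\<Sum>x\<in>F. (green_at a lam y x)\<^sup>2) \<le> 1 / lam\<^sup>2"
proof -
  define P :: real where "P = (2 * pi) ^ CARD('d)"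
  define g where "g x = green_at a lam y x" for x
  define h where "h = resolvent_symbol a lam"
  define S where "S \<theta> = (\<Sum>m\<in>(\<lambda>x. y - x) ` F. complex_of_real (g (y - m)) * fourier_char \<theta> m)"
    for \<theta> :: "real ^ 'd"
  have inj: "inj_on (\<lambda>x. y - x) F" by (simp add: inj_on_def)
  have S_eq: "S \<theta> = (\<Sum>x\<in>F. complex_of_real (g x) * fourier_char \<theta> (y - x))" for \<theta>
    unfolding S_def by (simp add: sum.reindex[OF inj])
  have hc: "continuous_on period_box h"
    unfolding h_def by (rule continuous_on_resolvent_symbol[OF ker lam])
  have P: "P > 0" unfolding P_def by simp
  have "P * (\<Sum>x\<in>F. (g x)\<^sup>2) = (\<Sum>x\<in>F. g x * Re (resolvent_coeff a lam (y - x)))"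
    by (simp add: g_def green_at_eq_resolvent_coeff P_def sum_distrib_left power2_eq_square)
  also have "\<dots> = Re (\<Sum>x\<in>F. integral period_box (\<lambda>\<theta>. complex_of_real (g x) * fourier_char \<theta> (y - x) * h \<theta>))"
    by (simp add: Re_sum resolvent_coeff_def h_def mult.assoc)
  also have "\<dots> = Re (integral period_box (\<lambda>\<theta>. S \<theta> * h \<theta>))"
    unfolding S_eq sum_distrib_right
    by (subst integral_sum[OF F]) (auto intro!: integrable_continuous continuous_intros continuous_on_fourier_char hc)
  also have "\<dots> \<le> norm (integral period_box (\<lambda>\<theta>. S \<theta> * h \<theta>))"
    by (rule complex_Re_le_cmod)
  also have "\<dots> \<le> integral period_box (\<lambda>\<theta>. (norm (S \<theta>))\<^sup>2) / 2 + integral period_box (\<lambda>\<theta>. (norm (h \<theta>))\<^sup>2) / 2"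
    by (rule norm_integral_mult_le[OF _ hc])
       (auto simp: S_def intro!: continuous_intros continuous_on_fourier_char)
  also have "\<dots> \<le> P * (\<Sum>x\<in>F. (g x)\<^sup>2) / 2 + P * (1 / lam)\<^sup>2 / 2"
  proof -
    have "integral period_box (\<lambda>\<theta>. (norm (S \<theta>))\<^sup>2)
        = P * (\<Sum>m\<in>(\<lambda>x. y - x) ` F. (norm (complex_of_real (g (y - m))))\<^sup>2)"
      unfolding S_def P_def by (rule integral_norm_sq_fourier_sum[OF finite_imageI[OF F]])
    also have "\<dots> = P * (\<Sum>x\<in>F. (g x)\<^sup>2)"
      by (simp add: sum.reindex[OF inj])
    finally have "integral period_box (\<lambda>\<theta>. (norm (S \<theta>))\<^sup>2) = P * (\<Sum>x\<in>F. (g x)\<^sup>2)" .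
    moreover have "integral period_box (\<lambda>\<theta>. (norm (h \<theta>))\<^sup>2) \<le> P * (1 / lam)\<^sup>2"
      unfolding h_def P_def by (rule integral_norm_sq_resolvent_symbol_le[OF ker lam])
    ultimately show ?thesis by linarith
  qed
  finally have "P * (\<Sum>x\<in>F. (g x)\<^sup>2) \<le> P * (1 / lam)\<^sup>2"
    by linarith
  then have "(\<Sum>x\<in>F. (g x)\<^sup>2) \<le> (1 / lam)\<^sup>2"
    using P by (rule mult_left_le_imp_le)
  then show ?thesis by (simp add: g_def power_divide)
qed

lemma in_l2_green_at:
  fixes a :: "int ^ 'd \<Rightarrow> real"
  assumes "rw_kernel a" "lam > 0"
  shows "in_l2 (green_at a lam y)"
  unfolding in_l2_def
  by (rule nonneg_bdd_above_summable_on)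
     (auto intro!: bdd_aboveI2[where M = "1 / lam\<^sup>2"] sum_sq_green_at_le[OF assms])


section \<open>The generator and the minimum principle\<close>

lemma bounded_range_sum:
  fixes f :: "'i \<Rightarrow> 'a \<Rightarrow> 'b::real_normed_vector"
  assumes "finite I" "\<And>i. i \<in> I \<Longrightarrow> bounded (range (f i))"
  shows "bounded (range (\<lambda>x. \<Sum>i\<in>I. f i x))"
  using assms by (induction I rule: finite_induct) (simp_all add: bounded_plus_comp)

lemma bounded_range_cmult: "bounded (range f) \<Longrightarrow> bounded (range (\<lambda>x. c * f x :: real))"
  using bounded_scaleR_comp[of f UNIV c] by simp

lemma opA_eq_infsum:
  fixes a :: "int ^ 'd \<Rightarrow> real"
  shows "opA a u x = (\<Sum>\<^sub>\<infinity>w. a w * u (x - w))"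
proof -
  have "bij_betw (\<lambda>w. x - w) (UNIV :: (int ^ 'd) set) UNIV"
    by (rule bij_betwI[where g = "\<lambda>w. x - w"]) auto
  from infsum_reindex_bij_betw[OF this, of "\<lambda>x'. a (x - x') * u x'"] show ?thesis
    by (simp add: opA_def)
qed

lemma opA_has_sum:
  assumes "rw_kernel a" "bounded (range u)"
  shows "((\<lambda>w. a w * u (x - w)) has_sum opA a u x) UNIV"
proof -
  obtain M where "\<And>y. \<bar>u y\<bar> \<le> M" using assms(2) by (auto simp: bounded_real)
  then have "(\<lambda>w. a w * u (x - w)) summable_on UNIV"
    using rw_kernel_summable_scaleR[OF assms(1), of "\<lambda>w. u (x - w)" M] by simp
  then show ?thesis by (simp add: opA_eq_infsum)
qed

lemma opA_add:
  assumes "rw_kernel a" "bounded (range u)" "bounded (range v)"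
  shows "opA a (\<lambda>x. u x + v x) x = opA a u x + opA a v x"
  using has_sum_add[OF opA_has_sum[OF assms(1,2)] opA_has_sum[OF assms(1,3)], of x]
    opA_has_sum[OF assms(1) bounded_plus_comp[OF assms(2,3)], of x]
  by (simp add: distrib_left has_sum_unique)

lemma opA_cmult: "opA a (\<lambda>x. c * u x) x = c * opA a u x"
  unfolding opA_def using infsum_cmult_right'[of c "\<lambda>x'. a (x - x') * u x'" UNIV]
  by (simp add: mult_ac)

lemma opA_sum:
  assumes "rw_kernel a" "finite I" "\<And>i. i \<in> I \<Longrightarrow> bounded (range (f i))"
  shows "opA a (\<lambda>x. \<Sum>i\<in>I. f i x) x = (\<Sum>i\<in>I. opA a (f i) x)"
  using assms(2,3)
proof (induction I rule: finite_induct)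
  case empty
  then show ?case by (simp add: opA_def)
next
  case (insert i I)
  then have "opA a (\<lambda>x. f i x + (\<Sum>j\<in>I. f j x)) x = opA a (f i) x + opA a (\<lambda>x. \<Sum>j\<in>I. f j x) x"
    by (intro opA_add[OF assms(1)] bounded_range_sum) auto
  with insert show ?case by simp
qed

definition jump_rate :: "(int ^ 'd \<Rightarrow> real) \<Rightarrow> int ^ 'd \<Rightarrow> real" where
  "jump_rate a v = (if v = 0 then 0 else a v)"

lemma jump_rate_nonneg: "rw_kernel a \<Longrightarrow> jump_rate a v \<ge> 0"
  by (simp add: rw_kernel_def jump_rate_def)

lemma has_sum_jump_rate_conv:
  fixes f :: "int ^ 'd \<Rightarrow> real"
  assumes "((\<lambda>v. a v * f (x - v)) has_sum S) UNIV"
  shows "((\<lambda>v. jump_rate a v * f (x - v)) has_sum (S - a 0 * f x)) UNIV"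
proof -
  have "((\<lambda>v. if v = 0 then - (a 0 * f x) else 0) has_sum (- (a 0 * f x))) UNIV"
    by (rule has_sum_finite_neutralI[where B = "{0}"]) auto
  from has_sum_add[OF assms this]
  have "((\<lambda>v. a v * f (x - v) + (if v = 0 then - (a 0 * f x) else 0)) has_sum (S - a 0 * f x)) UNIV"
    by simp
  moreover have "a v * f (x - v) + (if v = 0 then - (a 0 * f x) else 0) = jump_rate a v * f (x - v)" for v
    by (simp add: jump_rate_def)
  ultimately show ?thesis by simp
qed

lemma jump_rate_has_sum:
  assumes "rw_kernel a"
  shows "(jump_rate a has_sum (- a 0)) UNIV"
  using has_sum_jump_rate_conv[of a "\<lambda>_. 1" 0 0] rw_kernel_has_sum[OF assms] by simp

text \<open>Minimum principle: at (near) the infimum \<open>m\<close> of \<open>g\<close> the jumps can only raise \<open>g\<close>, which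
  forces \<open>\<lambda> m \<ge> 0\<close>.\<close>

lemma nonneg_if_opA_le:
  fixes g :: "int ^ 'd \<Rightarrow> real"
  assumes ker: "rw_kernel a" and lam: "lam > 0" and bd: "bounded (range g)"
    and super: "\<And>x. opA a g x \<le> lam * g x"
  shows "g x \<ge> 0"
proof -
  define c where "c = - a 0"
  have c: "c > 0" using ker unfolding rw_kernel_def c_def by auto
  define m where "m = (INF x. g x)"
  have gm: "m \<le> g x" for x
    unfolding m_def by (rule cINF_lower[OF bounded_imp_bdd_below[OF bd]]) simp
  have key: "c * m \<le> (lam + c) * g x" for x
  proof -
    have "((\<lambda>v. jump_rate a v * m) has_sum (c * m)) UNIV"
      using has_sum_cmult_left[OF jump_rate_has_sum[OF ker]] unfolding c_def .
    moreover have "((\<lambda>v. jump_rate a v * g (x - v)) has_sum (opA a g x - a 0 * g x)) UNIV"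
      by (rule has_sum_jump_rate_conv[OF opA_has_sum[OF ker bd]])
    ultimately have "c * m \<le> opA a g x - a 0 * g x"
      by (rule has_sum_mono) (simp add: mult_left_mono gm jump_rate_nonneg[OF ker])
    then show ?thesis using super[of x] unfolding c_def by (simp add: algebra_simps)
  qed
  have "c * m / (lam + c) \<le> m"
    unfolding m_def
  proof (rule cINF_greatest)
    show "c * (INF x. g x) / (lam + c) \<le> g x" for x
      using key[of x] lam c unfolding m_def by (simp add: field_simps mult.commute)
  qed simp
  then have "0 \<le> lam * m" using lam c by (simp add: field_simps)
  then show ?thesis using lam gm[of x] by (simp add: zero_le_mult_iff)
qed

lemma bounded_eigenfunction_opA_eq_zero:
  fixes w :: "int ^ 'd \<Rightarrow> real"
  assumes "rw_kernel a" "lam > 0" "bounded (range w)" "\<And>x. opA a w x = lam * w x"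
  shows "w x = 0"
proof -
  have "w x \<ge> 0"
    using assms by (intro nonneg_if_opA_le) auto
  moreover have "- w x \<ge> 0"
    using assms opA_cmult[of a "- 1" w] by (intro nonneg_if_opA_le[where g = "\<lambda>x. - w x"]) auto
  ultimately show ?thesis by simp
qed

lemma bounded_green_at: "rw_kernel a \<Longrightarrow> lam > 0 \<Longrightarrow> bounded (range (green_at a lam y))"
  unfolding bounded_real using abs_green_at_le by blast

lemma opA_green_at:
  assumes "rw_kernel a" "lam > 0"
  shows "opA a (green_at a lam y) x = lam * green_at a lam y x - (if x = y then 1 else 0)"
  using opA_has_sum[OF assms(1) bounded_green_at[OF assms]] green_at_has_sum[OF assms]
  by (rule has_sum_unique)

lemma green_at_nonneg: "rw_kernel a \<Longrightarrow> lam > 0 \<Longrightarrow> green_at a lam y x \<ge> 0"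
  by (rule nonneg_if_opA_le) (auto simp: bounded_green_at opA_green_at)

text \<open>A zero of \<open>G\<^sub>\<lambda>(\<cdot>, y)\<close> is not \<open>y\<close>, and it spreads along every jump: the equation
  \<open>(\<lambda> - \<A>) G = \<delta>\<^sub>y\<close> at the zero expresses \<open>- \<delta>\<^sub>y\<close> as a sum of nonnegative terms.\<close>

lemma green_at_eq_zero_imp:
  fixes a :: "int ^ 'd \<Rightarrow> real"
  assumes ker: "rw_kernel a" and lam: "lam > 0" and z: "green_at a lam y x = 0"
  shows "x \<noteq> y" "a v \<noteq> 0 \<Longrightarrow> green_at a lam y (x - v) = 0"
proof -
  define t where "t v = jump_rate a v * green_at a lam y (x - v)" for v
  have t: "(t has_sum (- (if x = y then 1 else 0))) UNIV"
    using has_sum_jump_rate_conv[OF green_at_has_sum[OF ker lam, of y x]] z unfolding t_def by simp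
  have t_nonneg: "t v \<ge> 0" for v
    unfolding t_def by (simp add: jump_rate_nonneg[OF ker] green_at_nonneg[OF ker lam])
  have "- (if x = y then 1 else 0) \<ge> (0::real)"
    by (rule has_sum_nonneg[OF t t_nonneg])
  then show xy: "x \<noteq> y" by (auto split: if_splits)
  have "((\<lambda>u. if u = v then t v else 0) has_sum t v) UNIV"
    by (rule has_sum_finite_neutralI[where B = "{v}"]) auto
  then have "t v \<le> 0"
    using has_sum_mono[OF _ t, of "\<lambda>u. if u = v then t v else 0" "t v"] t_nonneg xy by auto
  moreover assume "a v \<noteq> 0"
  ultimately show "green_at a lam y (x - v) = 0"
    using z t_nonneg[of v] ker mult_pos_pos[of "a v"] unfolding t_def jump_rate_def rw_kernel_def
    by (cases "v = 0") (auto simp: less_le)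
qed

lemma green_at_pos:
  fixes a :: "int ^ 'd \<Rightarrow> real"
  assumes ker: "rw_kernel a" and lam: "lam > 0"
  shows "green_at a lam y x > 0"
proof (rule ccontr)
  assume "\<not> green_at a lam y x > 0"
  then have z: "green_at a lam y x = 0" using green_at_nonneg[OF ker lam, of y x] by simp
  have "green_at a lam y (x - sum_list zs) = 0" if "\<forall>w\<in>set zs. a w \<noteq> 0" for zs
    using that
  proof (induction zs)
    case Nil
    then show ?case using z by simp
  next
    case (Cons w zs)
    then have "green_at a lam y ((x - sum_list zs) - w) = 0"
      using green_at_eq_zero_imp(2)[OF ker lam] by simp
    then show ?case by (simp add: algebra_simps)
  qed
  moreover obtain zs where "\<forall>w\<in>set zs. a w \<noteq> 0" "sum_list zs = x - y"
    using ker unfolding rw_kernel_def by blast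
  ultimately have "green_at a lam y y = 0" by fastforce
  then show False using green_at_eq_zero_imp(1)[OF ker lam] by blast
qed

lemma in_l2_imp_bounded:
  assumes "in_l2 u"
  shows "bounded (range u)"
  unfolding bounded_real
proof (intro exI ballI)
  fix v assume "v \<in> range u"
  then obtain x where v: "v = u x" by blast
  have "(u x)\<^sup>2 = infsum (\<lambda>x. (u x)\<^sup>2) {x}" by simp
  also have "\<dots> \<le> (\<Sum>\<^sub>\<infinity>x. (u x)\<^sup>2)"
    by (rule infsum_mono_neutral) (use assms in \<open>auto simp: in_l2_def\<close>)
  finally show "\<bar>v\<bar> \<le> sqrt (\<Sum>\<^sub>\<infinity>x. (u x)\<^sup>2)"
    unfolding v using real_sqrt_le_mono by fastforce
qed

lemma in_l2_add:
  assumes "in_l2 u" "in_l2 v"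
  shows "in_l2 (\<lambda>x. u x + v x)"
proof -
  have "(\<lambda>x. 2 * (u x)\<^sup>2 + 2 * (v x)\<^sup>2) summable_on UNIV"
    using assms unfolding in_l2_def by (intro summable_on_add summable_on_cmult_right)
  moreover have "(u x + v x)\<^sup>2 \<le> 2 * (u x)\<^sup>2 + 2 * (v x)\<^sup>2" for x
    unfolding power2_sum using power2_diff[of "u x" "v x"] zero_le_power2[of "u x - v x"] by linarith
  ultimately show ?thesis
    unfolding in_l2_def by (rule summable_on_comparison_test) simp
qed

lemma in_l2_cmult: "in_l2 u \<Longrightarrow> in_l2 (\<lambda>x. c * u x)"
  using summable_on_cmult_right[of "\<lambda>x. (u x)\<^sup>2" UNIV "c\<^sup>2"]
  unfolding in_l2_def by (simp add: power_mult_distrib)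

lemma in_l2_sum: "finite I \<Longrightarrow> (\<And>i. i \<in> I \<Longrightarrow> in_l2 (f i)) \<Longrightarrow> in_l2 (\<lambda>x. \<Sum>i\<in>I. f i x)"
  by (induction I rule: finite_induct) (simp_all add: in_l2_def[of "\<lambda>_. 0"] in_l2_add)


section \<open>Point perturbations\<close>

definition green_potential ::
  "(int ^ 'd \<Rightarrow> real) \<Rightarrow> real \<Rightarrow> ('n::finite \<Rightarrow> int ^ 'd) \<Rightarrow> real ^ 'n \<Rightarrow> int ^ 'd \<Rightarrow> real" where
  "green_potential a lam xs p x = (\<Sum>j\<in>UNIV. p $ j * green_at a lam (xs j) x)"

definition Gamma_real :: "(int ^ 'd \<Rightarrow> real) \<Rightarrow> real \<Rightarrow> ('n::finite \<Rightarrow> int ^ 'd) \<Rightarrow> real ^ 'n ^ 'n" where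
  "Gamma_real a lam xs = (\<chi> i j. green_at a lam (xs j) (xs i))"

lemma Gamma_mat_eq_of_real:
  "rw_kernel a \<Longrightarrow> Gamma_mat a lam xs = (\<chi> i j. complex_of_real (Gamma_real a lam xs $ i $ j))"
  by (simp add: Gamma_mat_def Gamma_real_def green_eq_of_real_green_at)

lemma green_potential_at_point: "green_potential a lam xs p (xs i) = (Gamma_real a lam xs *v p) $ i"
  by (simp add: green_potential_def Gamma_real_def matrix_vector_mult_def mult.commute)

lemma green_potential_zero [simp]: "green_potential a lam xs 0 = (\<lambda>_. 0)"
  by (simp add: green_potential_def fun_eq_iff)

lemma bounded_green_potential:
  "rw_kernel a \<Longrightarrow> lam > 0 \<Longrightarrow> bounded (range (green_potential a lam xs p))"
  unfolding green_potential_def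
  by (intro bounded_range_sum) (auto intro: bounded_range_cmult bounded_green_at)

lemma in_l2_green_potential:
  "rw_kernel a \<Longrightarrow> lam > 0 \<Longrightarrow> in_l2 (green_potential a lam xs p)"
  unfolding green_potential_def by (intro in_l2_sum in_l2_cmult in_l2_green_at) auto

lemma opA_green_potential:
  assumes "rw_kernel a" "lam > 0"
  shows "opA a (green_potential a lam xs p) x
       = lam * green_potential a lam xs p x - (\<Sum>j\<in>UNIV. if x = xs j then p $ j else 0)"
proof -
  have "opA a (green_potential a lam xs p) x = (\<Sum>j\<in>UNIV. opA a (\<lambda>x. p $ j * green_at a lam (xs j) x) x)"
    unfolding green_potential_def
    by (rule opA_sum[OF assms(1)]) (auto intro: bounded_range_cmult bounded_green_at[OF assms])
  also have "\<dots> = (\<Sum>j\<in>UNIV. lam * (p $ j * green_at a lam (xs j) x) - (if x = xs j then p $ j else 0))"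
    by (intro sum.cong) (simp_all add: opA_cmult opA_green_at[OF assms] algebra_simps)
  finally show ?thesis
    by (simp add: green_potential_def sum_subtractf sum_distrib_left)
qed

text \<open>An \<open>l\<^sup>2\<close> eigenfunction is bounded, so subtracting the potential of its values at the
  \<open>x\<^sub>i\<close> leaves a bounded solution of \<open>\<A> w = \<lambda> w\<close>, which vanishes.\<close>

lemma opH_eigenfunction_eq_green_potential:
  assumes ker: "rw_kernel a" and lam: "lam > 0" and u: "in_l2 u" "\<And>x. opH a \<beta> xs u x = lam * u x"
  shows "u x = \<beta> * green_potential a lam xs (\<chi> i. u (xs i)) x"
proof -
  define S where "S = green_potential a lam xs (\<chi> i. u (xs i))"
  define \<delta> where "\<delta> x = (\<Sum>j\<in>UNIV. if x = xs j then u (xs j) else 0)" for x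
  have bS: "bounded (range (\<lambda>x. - \<beta> * S x))"
    unfolding S_def by (rule bounded_range_cmult bounded_green_potential[OF ker lam])+
  have bu: "bounded (range u)" by (rule in_l2_imp_bounded[OF u(1)])
  have "opA a (\<lambda>x. u x + - \<beta> * S x) x = lam * (u x + - \<beta> * S x)" for x
  proof -
    have opAu: "opA a u x = lam * u x - \<beta> * \<delta> x"
      using u(2)[of x] unfolding opH_def \<delta>_def by (simp add: if_distrib cong: if_cong)
    have opAS: "opA a S x = lam * S x - \<delta> x"
      unfolding S_def \<delta>_def by (simp add: opA_green_potential[OF ker lam] cong: if_cong)
    show ?thesis
      unfolding opA_add[OF ker bu bS] opA_cmult opAu opAS by (simp add: algebra_simps)
  qed
  then have "u x + - \<beta> * S x = 0"
    using bounded_eigenfunction_opA_eq_zero[OF ker lam bounded_plus_comp[OF bu bS]] by blast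
  then show ?thesis unfolding S_def by simp
qed

lemma green_potential_eigenfunction:
  assumes ker: "rw_kernel a" and lam: "lam > 0" and p: "\<beta> *s (Gamma_real a lam xs *v p) = p"
  shows "opH a \<beta> xs (\<lambda>x. \<beta> * green_potential a lam xs p x) x = lam * (\<beta> * green_potential a lam xs p x)"
proof -
  have "\<beta> * green_potential a lam xs p (xs i) = p $ i" for i
    using arg_cong[OF p, of "\<lambda>v. v $ i"] by (simp add: green_potential_at_point)
  then show ?thesis
    by (simp add: opH_def opA_cmult opA_green_potential[OF ker lam] algebra_simps if_distrib
        cong: if_cong)
qed

lemma l2_eigenvalue_opH_iff:
  assumes ker: "rw_kernel a" and lam: "lam > 0"
  shows "is_l2_eigenvalue (opH a \<beta> xs) lam \<longleftrightarrow> (\<exists>p. p \<noteq> 0 \<and> \<beta> *s (Gamma_real a lam xs *v p) = p)"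
proof
  assume "is_l2_eigenvalue (opH a \<beta> xs) lam"
  then obtain u where u: "in_l2 u" "u \<noteq> (\<lambda>_. 0)" "\<And>x. opH a \<beta> xs u x = lam * u x"
    unfolding is_l2_eigenvalue_def by blast
  define p where "p = (\<chi> i. u (xs i))"
  have u_eq: "u x = \<beta> * green_potential a lam xs p x" for x
    unfolding p_def by (rule opH_eigenfunction_eq_green_potential[OF ker lam u(1,3)])
  show "\<exists>p. p \<noteq> 0 \<and> \<beta> *s (Gamma_real a lam xs *v p) = p"
  proof (intro exI conjI)
    show "p \<noteq> 0"
    proof
      assume "p = 0"
      then have "u = (\<lambda>_. 0)" using u_eq by (simp add: fun_eq_iff)
      with u(2) show False ..
    qed
    have "p $ i = \<beta> * (Gamma_real a lam xs *v p) $ i" for i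
    proof -
      have "p $ i = u (xs i)" by (simp add: p_def)
      then show ?thesis by (simp add: u_eq green_potential_at_point)
    qed
    then show "\<beta> *s (Gamma_real a lam xs *v p) = p"
      by (simp add: vec_eq_iff)
  qed
next
  assume "\<exists>p. p \<noteq> 0 \<and> \<beta> *s (Gamma_real a lam xs *v p) = p"
  then obtain p where p: "p \<noteq> 0" "\<beta> *s (Gamma_real a lam xs *v p) = p" by blast
  obtain i where "p $ i \<noteq> 0" using p(1) by (auto simp: vec_eq_iff)
  moreover have "\<beta> * green_potential a lam xs p (xs i) = p $ i"
    using arg_cong[OF p(2), of "\<lambda>v. v $ i"] by (simp add: green_potential_at_point)
  ultimately have "(\<lambda>x. \<beta> * green_potential a lam xs p x) \<noteq> (\<lambda>_. 0)"
    by (metis (mono_tags))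
  then show "is_l2_eigenvalue (opH a \<beta> xs) lam"
    unfolding is_l2_eigenvalue_def
    using in_l2_cmult[OF in_l2_green_potential[OF ker lam]] green_potential_eigenfunction[OF ker lam p(2)]
    by blast
qed

text \<open>For the forward direction take the real or the imaginary part of a complex eigenvector.\<close>

lemma mat_eigenvalue_of_real_iff:
  fixes R :: "real ^ 'n ^ 'n"
  shows "(\<exists>\<gamma>. mat_eigenvalue (\<chi> i j. complex_of_real (R $ i $ j)) \<gamma> \<and> \<gamma> * complex_of_real \<beta> = 1)
     \<longleftrightarrow> (\<exists>p. p \<noteq> 0 \<and> \<beta> *s (R *v p) = p)"
proof
  assume "\<exists>\<gamma>. mat_eigenvalue (\<chi> i j. complex_of_real (R $ i $ j)) \<gamma> \<and> \<gamma> * complex_of_real \<beta> = 1"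
  then obtain \<gamma> v where v: "v \<noteq> 0" "(\<chi> i j. complex_of_real (R $ i $ j)) *v v = \<gamma> *s v"
    and \<gamma>: "\<gamma> * complex_of_real \<beta> = 1"
    unfolding mat_eigenvalue_def by blast
  have comp: "complex_of_real \<beta> * (\<Sum>j\<in>UNIV. complex_of_real (R $ i $ j) * v $ j) = v $ i" for i
    using arg_cong[OF v(2), of "\<lambda>w. complex_of_real \<beta> * w $ i"] \<gamma>
    by (simp add: matrix_vector_mult_def mult.assoc[symmetric] mult.commute[of "complex_of_real \<beta>"])
  have re: "\<beta> *s (R *v (\<chi> j. Re (v $ j))) = (\<chi> j. Re (v $ j))"
    using arg_cong[OF comp, of Re] by (simp add: vec_eq_iff matrix_vector_mult_def Re_sum sum_distrib_left)
  have im: "\<beta> *s (R *v (\<chi> j. Im (v $ j))) = (\<chi> j. Im (v $ j))"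
    using arg_cong[OF comp, of Im] by (simp add: vec_eq_iff matrix_vector_mult_def Im_sum sum_distrib_left)
  have "(\<chi> j. Re (v $ j)) \<noteq> 0 \<or> (\<chi> j. Im (v $ j)) \<noteq> 0"
    using v(1) by (auto simp: vec_eq_iff complex_eq_iff)
  then show "\<exists>p. p \<noteq> 0 \<and> \<beta> *s (R *v p) = p"
    using re im by blast
next
  assume "\<exists>p. p \<noteq> 0 \<and> \<beta> *s (R *v p) = p"
  then obtain p where p: "p \<noteq> 0" "\<beta> *s (R *v p) = p" by blast
  then have \<beta>: "\<beta> \<noteq> 0" by auto
  have "(R *v p) $ i = p $ i / \<beta>" for i
    using arg_cong[OF p(2), of "\<lambda>w. w $ i"] \<beta> by (simp add: field_simps)
  then have "(\<chi> i j. complex_of_real (R $ i $ j)) *v (\<chi> i. complex_of_real (p $ i))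
      = complex_of_real (1 / \<beta>) *s (\<chi> i. complex_of_real (p $ i))"
    by (simp add: vec_eq_iff matrix_vector_mult_def flip: of_real_mult of_real_sum)
  moreover have "(\<chi> i. complex_of_real (p $ i)) \<noteq> 0"
    using p(1) by (simp add: vec_eq_iff)
  ultimately show "\<exists>\<gamma>. mat_eigenvalue (\<chi> i j. complex_of_real (R $ i $ j)) \<gamma> \<and> \<gamma> * complex_of_real \<beta> = 1"
    unfolding mat_eigenvalue_def using \<beta> by (intro exI[of _ "complex_of_real (1 / \<beta>)"]) (auto simp flip: of_real_mult)
qed

text \<open>The sum in \<open>opH\<close> counts repeated points with multiplicity.\<close>

theorem lemma1:
  fixes a :: "int ^ 'd \<Rightarrow> real"
    and xs :: "'n::finite \<Rightarrow> int ^ 'd"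
    and \<beta> lam :: real
  assumes "rw_kernel a"
    and "inj xs"
    and "lam > 0"
  shows "(is_l2_eigenvalue (opH a \<beta> xs) lam \<longleftrightarrow>
           (\<exists>\<gamma>. mat_eigenvalue (Gamma_mat a lam xs) \<gamma> \<and> \<gamma> * complex_of_real \<beta> = 1))
         \<and> (\<forall>i j. Im (Gamma_mat a lam xs $ i $ j) = 0 \<and> Re (Gamma_mat a lam xs $ i $ j) > 0)"
  unfolding Gamma_mat_eq_of_real[OF assms(1)] mat_eigenvalue_of_real_iff l2_eigenvalue_opH_iff[OF assms(1,3)]
  using green_at_pos[OF assms(1,3)] by (simp add: Gamma_real_def)

end
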